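(* Let $M$ be a proper metric space and $\chi_1,\dots,\chi_n$ a coarsely transverse collection of switch functions on $M$, and put $X_i=\mathrm{supp}(\chi_i)$. Then $\mathbf 1\wedge\chi_1\wedge\dots\wedge\chi_n$ is a coarse cochain on $M$, and $$[\mathbf 1\wedge\chi_1\wedge\dots\wedge\chi_n]=[\mathbf 1\wedge X_1\wedge\dots\wedge X_n]\in HX^n(M).$$
   Context: Borel sets are identified with their indicator functions; $\mathbf 1$ is the constant function $1$. For $Y\subseteq M$, $Y_R=\{x:d(x,Y)\le R\}$. A coarsely transverse collection of switch functions is a collection of bounded Borel functions $\chi_1,\dots,\chi_n:M\to\mathbb{C}$ such that the sets $\mathrm{supp}(\chi_i),\mathrm{supp}(\mathbf 1-\chi_i)$, $i=1,\dots,n$, are coarsely transverse, i.e. the intersection of their $R$-thickenings is bounded for every $R$. Coarse cohomology: $M^{n+1}$ has the max metric, $\Delta_R$ is the $R$-thickening of the multi-diagonal; a coarse $n$-cochain is a locally bounded Borel $\theta:M^{n+1}\to\mathbb{C}$ with $\mathrm{supp}(\theta)\cap\Delta_R$ bounded for all $R$; $\delta\theta=\sum_{i=0}^{n+1}(-1)^i\pi_i^*\theta$ ($\pi_i$ omits coordinate $i$); $HX^n(M)$ is the cohomology. $f_0\wedge\dots\wedge f_n=\sum_{\sigma\in S_{n+1}}\mathrm{sgn}(\sigma)f_{\sigma_0}\otimes\dots\otimes f_{\sigma_n}$. *)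

theory Defs
  imports "HOL-Analysis.Analysis" "HOL-Combinatorics.Permutations"
begin

definition supp :: "('a \<Rightarrow> complex) \<Rightarrow> 'a set" where
  "supp f = {x. f x \<noteq> 0}"

text \<open>R-thickening Y_R = {x. d(x,Y) \<le> R}, with d(x,{}) = \<infinity> (so the thickening of {} is empty).\<close>
definition thickening :: "'a::metric_space set \<Rightarrow> real \<Rightarrow> 'a set" where
  "thickening Y R = {x. Y \<noteq> {} \<and> infdist x Y \<le> R}"

definition coarsely_transverse_switch :: "nat \<Rightarrow> (nat \<Rightarrow> 'a::metric_space \<Rightarrow> complex) \<Rightarrow> bool" where
  "coarsely_transverse_switch n chi \<longleftrightarrow>
     (\<forall>i\<in>{1..n}. chi i \<in> borel_measurable borel \<and> bounded (range (chi i))) \<and>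
     (\<forall>R. bounded (\<Inter>i\<in>{1..n}. thickening (supp (chi i)) R
                                   \<inter> thickening (supp (\<lambda>x. 1 - chi i x)) R))"

definition tuples :: "nat \<Rightarrow> (nat \<Rightarrow> 'a) set" where
  "tuples n = {..n} \<rightarrow>\<^sub>E UNIV"

definition dist_max :: "nat \<Rightarrow> (nat \<Rightarrow> 'a::metric_space) \<Rightarrow> (nat \<Rightarrow> 'a) \<Rightarrow> real" where
  "dist_max n x y = Max ((\<lambda>i. dist (x i) (y i)) ` {..n})"

definition bounded_tuples :: "nat \<Rightarrow> (nat \<Rightarrow> 'a::metric_space) set \<Rightarrow> bool" where
  "bounded_tuples n S \<longleftrightarrow> (\<exists>c r. \<forall>x\<in>S. dist_max n x c \<le> r)"

definition diag_thick :: "nat \<Rightarrow> real \<Rightarrow> (nat \<Rightarrow> 'a::metric_space) set" where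
  "diag_thick n R = {x \<in> tuples n. \<exists>p. dist_max n x (\<lambda>_. p) \<le> R}"

definition locally_bounded_on_tuples :: "nat \<Rightarrow> ((nat \<Rightarrow> 'a::metric_space) \<Rightarrow> complex) \<Rightarrow> bool" where
  "locally_bounded_on_tuples n \<theta> \<longleftrightarrow>
     (\<forall>x\<in>tuples n. \<exists>e>0. bounded (\<theta> ` {y \<in> tuples n. dist_max n x y < e}))"

definition coarse_cochain :: "nat \<Rightarrow> ((nat \<Rightarrow> 'a::metric_space) \<Rightarrow> complex) \<Rightarrow> bool" where
  "coarse_cochain n \<theta> \<longleftrightarrow>
     \<theta> \<in> borel_measurable (PiM {..n} (\<lambda>_. borel)) \<and>
     locally_bounded_on_tuples n \<theta> \<and>
     (\<forall>R. bounded_tuples n ({x \<in> tuples n. \<theta> x \<noteq> 0} \<inter> diag_thick n R))"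

definition omit_coord :: "nat \<Rightarrow> nat \<Rightarrow> (nat \<Rightarrow> 'a) \<Rightarrow> (nat \<Rightarrow> 'a)" where
  "omit_coord n i x = restrict (\<lambda>j. if j < i then x j else x (Suc j)) {..n}"

definition coboundary :: "nat \<Rightarrow> ((nat \<Rightarrow> 'a) \<Rightarrow> complex) \<Rightarrow> (nat \<Rightarrow> 'a) \<Rightarrow> complex" where
  "coboundary n \<theta> x = (\<Sum>i\<le>Suc n. (-1) ^ i * \<theta> (omit_coord n i x))"

definition coarse_cocycle :: "nat \<Rightarrow> ((nat \<Rightarrow> 'a::metric_space) \<Rightarrow> complex) \<Rightarrow> bool" where
  "coarse_cocycle n \<theta> \<longleftrightarrow> coarse_cochain n \<theta> \<and> (\<forall>x\<in>tuples (Suc n). coboundary n \<theta> x = 0)"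

text \<open>Equality of classes in HX^n(M): the difference of two cocycles is the coboundary
  of a coarse (n-1)-cochain (for n = 0: the cocycles agree).\<close>
definition same_class :: "nat \<Rightarrow> ((nat \<Rightarrow> 'a::metric_space) \<Rightarrow> complex) \<Rightarrow> ((nat \<Rightarrow> 'a) \<Rightarrow> complex) \<Rightarrow> bool" where
  "same_class n \<theta> \<theta>' \<longleftrightarrow> coarse_cocycle n \<theta> \<and> coarse_cocycle n \<theta>' \<and>
     (if n = 0 then (\<forall>x\<in>tuples 0. \<theta> x = \<theta>' x)
      else (\<exists>\<eta>. coarse_cochain (n - 1) \<eta> \<and>
              (\<forall>x\<in>tuples n. \<theta> x - \<theta>' x = coboundary (n - 1) \<eta> x)))"

definition wedge :: "nat \<Rightarrow> (nat \<Rightarrow> 'a \<Rightarrow> complex) \<Rightarrow> (nat \<Rightarrow> 'a) \<Rightarrow> complex" where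
  "wedge n f x = (\<Sum>\<sigma> | \<sigma> permutes {..n}. of_int (sign \<sigma>) * (\<Prod>i\<le>n. f (\<sigma> i) (x i)))"

definition one_then :: "(nat \<Rightarrow> 'a \<Rightarrow> complex) \<Rightarrow> nat \<Rightarrow> 'a \<Rightarrow> complex" where
  "one_then f i = (if i = 0 then (\<lambda>_. 1) else f i)"

end

(* At a point (x_0, ..., x_n), the wedge 1 /\ h_1 /\ ... /\ h_n is the determinant of the
   matrix [f_j(x_i)] with f = (1, h_1, ..., h_n).  Subtracting from each row the previous one
   turns it into the antisymmetrisation of the Alexander-Whitney cup product
   delta h_1 u ... u delta h_n, which is a cocycle.  Replacing chi_i by X_i in such a product
   changes it by the coboundary of an explicit cochain (cup_primitive), built by a telescoping
   Leibniz-rule argument.  A term is nonzero at (x_0, ..., x_n) only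
   if, for each i, some x_j lies in supp chi_i and some x_j' in supp (1 - chi_i): otherwise
   chi_i and X_i are both constantly 0 or both constantly 1 on these points.  Any point within
   R of all the x_j then lies in the intersection of the R-thickenings of these sets, which is
   bounded by coarse transversality; so the supports meet Delta_R in bounded sets. *)

theory Submission
  imports Defs "Jordan_Normal_Form.Determinant"
begin

lemma omit_coord_0: "omit_coord m 0 x = restrict (x \<circ> Suc) {..m}"
  by (simp add: omit_coord_def comp_def)

lemma omit_coord_Suc_0: "omit_coord m (Suc i) x 0 = x 0"
  by (simp add: omit_coord_def)

lemma omit_coord_Suc_Suc:
  "j \<le> m \<Longrightarrow> omit_coord (Suc m) (Suc i) x (Suc j) = omit_coord m i (x \<circ> Suc) j"
  by (simp add: omit_coord_def)

lemma coboundary_eq_first_face_minus: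
  "coboundary m \<theta> x = \<theta> (omit_coord m 0 x) - (\<Sum>i\<le>m. (-1)^i * \<theta> (omit_coord m (Suc i) x))"
  unfolding coboundary_def sum.atMost_Suc_shift by (simp add: sum_negf)

lemma coboundary_diff:
  "coboundary m (\<lambda>y. F y - G y) x = coboundary m F x - coboundary m G x"
  unfolding coboundary_def by (simp add: algebra_simps sum_subtractf)

lemma coboundary_sum:
  "coboundary m (\<lambda>y. \<Sum>t\<in>S. c t * F t y) x = (\<Sum>t\<in>S. c t * coboundary m (F t) x)"
  unfolding coboundary_def sum_distrib_left by (subst sum.swap) (simp add: mult.left_commute)

text \<open>The locality hypotheses are needed because the faces \<open>omit_coord\<close> are restricted to
  \<open>{..m}\<close> while \<open>x \<circ> Suc\<close> is not.\<close>

lemma coboundary_cup0: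
  assumes P_local: "\<And>x y. (\<And>j. j \<le> m \<Longrightarrow> x j = y j) \<Longrightarrow> P x = P y"
  shows "coboundary m (\<lambda>y. g (y 0) * P y) x
    = (g (x 1) - g (x 0)) * P (x \<circ> Suc) + g (x 0) * coboundary m P x"
proof -
  have "P (omit_coord m 0 x) = P (x \<circ> Suc)" by (rule P_local) (simp add: omit_coord_0)
  then show ?thesis unfolding coboundary_eq_first_face_minus
    by (simp add: omit_coord_Suc_0 algebra_simps sum_distrib_left) (simp add: omit_coord_def)
qed

lemma coboundary_delta_cup:
  assumes Q_local: "\<And>x y. (\<And>j. j \<le> m \<Longrightarrow> x j = y j) \<Longrightarrow> Q x = Q y"
  shows "coboundary (Suc m) (\<lambda>y. (b (y 1) - b (y 0)) * Q (y \<circ> Suc)) x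
    = - (b (x 1) - b (x 0)) * coboundary m Q (x \<circ> Suc)"
proof -
  have faces_01: "Q (omit_coord (Suc m) 0 x \<circ> Suc) = Q (x \<circ> Suc \<circ> Suc)"
    "Q (omit_coord (Suc m) (Suc 0) x \<circ> Suc) = Q (x \<circ> Suc \<circ> Suc)"
    "Q (omit_coord m 0 (x \<circ> Suc)) = Q (x \<circ> Suc \<circ> Suc)"
    by (rule Q_local; simp add: omit_coord_def)+
  have faces: "Q (omit_coord (Suc m) (Suc (Suc j)) x \<circ> Suc) = Q (omit_coord m (Suc j) (x \<circ> Suc))" for j
    by (rule Q_local) (simp add: omit_coord_Suc_Suc)
  have "coboundary (Suc m) (\<lambda>y. (b (y 1) - b (y 0)) * Q (y \<circ> Suc)) x
     = (b (x 2) - b (x 1)) * Q (x \<circ> Suc \<circ> Suc) - ((b (x 2) - b (x 0)) * Q (x \<circ> Suc \<circ> Suc)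
        - (b (x 1) - b (x 0)) * (\<Sum>i\<le>m. (-1)^i * Q (omit_coord m (Suc i) (x \<circ> Suc))))"
    unfolding coboundary_eq_first_face_minus[of "Suc m"] sum.atMost_Suc_shift
    by (simp add: faces_01 faces sum_negf sum_distrib_left mult.left_commute)
       (simp add: omit_coord_def numeral_2_eq_2)
  also have "\<dots> = - (b (x 1) - b (x 0)) * coboundary m Q (x \<circ> Suc)"
    unfolding coboundary_eq_first_face_minus[of m] faces_01 by (simp add: algebra_simps)
  finally show ?thesis .
qed

text \<open>The Alexander--Whitney cup product \<open>\<delta>a\<^sub>0 \<union> \<dots> \<union> \<delta>a\<^sub>m\<^sub>-\<^sub>1\<close>.\<close>
definition cup_deltas :: "nat \<Rightarrow> (nat \<Rightarrow> 'a \<Rightarrow> complex) \<Rightarrow> (nat \<Rightarrow> 'a) \<Rightarrow> complex" where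
  "cup_deltas m a x = (\<Prod>k<m. a k (x (Suc k)) - a k (x k))"

text \<open>\<open>P(a, b) = (a\<^sub>0 - b\<^sub>0) \<union> \<alpha> - \<delta>b\<^sub>0 \<union> P(a\<^sub>1\<^sub>.\<^sub>., b\<^sub>1\<^sub>.\<^sub>.)\<close> with \<open>\<alpha> = \<delta>a\<^sub>1 \<union> \<dots> \<union> \<delta>a\<^sub>m\<close> and
  \<open>\<beta>\<close> likewise for b.  By the Leibniz rules and induction,
  \<open>\<delta>P(a, b) = \<delta>(a\<^sub>0 - b\<^sub>0) \<union> \<alpha> + \<delta>b\<^sub>0 \<union> (\<alpha> - \<beta>) = \<delta>a\<^sub>0 \<union> \<alpha> - \<delta>b\<^sub>0 \<union> \<beta>\<close>.\<close>
fun cup_primitive ::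
  "nat \<Rightarrow> (nat \<Rightarrow> 'a \<Rightarrow> complex) \<Rightarrow> (nat \<Rightarrow> 'a \<Rightarrow> complex) \<Rightarrow> (nat \<Rightarrow> 'a) \<Rightarrow> complex" where
  "cup_primitive 0 a b y = a 0 (y 0) - b 0 (y 0)"
| "cup_primitive (Suc m) a b y = (a 0 (y 0) - b 0 (y 0)) * cup_deltas (Suc m) (a \<circ> Suc) y
      - (b 0 (y 1) - b 0 (y 0)) * cup_primitive m (a \<circ> Suc) (b \<circ> Suc) (y \<circ> Suc)"

lemma cup_deltas_local: "(\<And>j. j \<le> m \<Longrightarrow> x j = y j) \<Longrightarrow> cup_deltas m a x = cup_deltas m a y"
  unfolding cup_deltas_def by (intro prod.cong) auto

lemma cup_deltas_Suc:
  "cup_deltas (Suc m) a x = (a 0 (x 1) - a 0 (x 0)) * cup_deltas m (a \<circ> Suc) (x \<circ> Suc)"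
  unfolding cup_deltas_def prod.lessThan_Suc_shift by simp

lemma cup_deltas_eq_0_if_constant:
  assumes "k < m" "\<forall>p\<in>x ` {..m}. a k p = c"
  shows "cup_deltas m a x = 0"
proof -
  have "a k (x (Suc k)) - a k (x k) = 0" using assms by auto
  then show ?thesis unfolding cup_deltas_def using assms(1) by (auto simp: prod_zero_iff)
qed

lemma coboundary_cup_deltas: "coboundary m (cup_deltas m a) x = 0"
proof (induction m arbitrary: a x)
  case 0
  then show ?case by (simp add: coboundary_def cup_deltas_def)
next
  case (Suc m)
  have "cup_deltas (Suc m) a = (\<lambda>y. (a 0 (y 1) - a 0 (y 0)) * cup_deltas m (a \<circ> Suc) (y \<circ> Suc))"
    by (simp add: cup_deltas_Suc fun_eq_iff)
  then show ?case
    using coboundary_delta_cup[of m "cup_deltas m (a \<circ> Suc)", OF cup_deltas_local] Suc.IH by simp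
qed

lemma cup_primitive_local:
  "(\<And>j. j \<le> m \<Longrightarrow> x j = y j) \<Longrightarrow> cup_primitive m a b x = cup_primitive m a b y"
proof (induction m arbitrary: a b x y)
  case 0
  then show ?case by simp
next
  case (Suc m)
  have "cup_primitive m (a \<circ> Suc) (b \<circ> Suc) (x \<circ> Suc) = cup_primitive m (a \<circ> Suc) (b \<circ> Suc) (y \<circ> Suc)"
    by (rule Suc.IH) (simp add: Suc.prems)
  moreover have "cup_deltas (Suc m) (a \<circ> Suc) x = cup_deltas (Suc m) (a \<circ> Suc) y"
    by (rule cup_deltas_local) (simp add: Suc.prems)
  ultimately show ?case using Suc.prems[of 0] Suc.prems[of 1] by simp
qed

lemma cup_primitive_eq_0_if_constant:
  "k \<le> m \<Longrightarrow> \<forall>p\<in>y ` {..m}. a k p = c \<and> b k p = c \<Longrightarrow> cup_primitive m a b y = 0"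
proof (induction m arbitrary: a b y k)
  case 0
  then show ?case by simp
next
  case (Suc m)
  show ?case
  proof (cases k)
    case 0
    then have "a 0 (y 0) = c" "b 0 (y 0) = c" "b 0 (y 1) = c" using Suc.prems(2) by auto
    then show ?thesis by simp
  next
    case (Suc k')
    have "cup_deltas (Suc m) (a \<circ> Suc) y = 0"
      by (rule cup_deltas_eq_0_if_constant[of k']) (use Suc Suc.prems in auto)
    moreover have "cup_primitive m (a \<circ> Suc) (b \<circ> Suc) (y \<circ> Suc) = 0"
      by (rule Suc.IH[of k']) (use Suc Suc.prems in auto)
    ultimately show ?thesis by simp
  qed
qed

lemma cup_deltas_diff_eq_coboundary:
  "cup_deltas (Suc m) a x - cup_deltas (Suc m) b x = coboundary m (cup_primitive m a b) x"
proof (induction m arbitrary: a b x)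
  case 0
  show ?case by (simp add: coboundary_def cup_deltas_def omit_coord_def)
next
  case (Suc m)
  let ?a = "a \<circ> Suc" and ?b = "b \<circ> Suc"
  have split: "cup_primitive (Suc m) a b = (\<lambda>y. (a 0 (y 0) - b 0 (y 0)) * cup_deltas (Suc m) ?a y
      - (b 0 (y 1) - b 0 (y 0)) * cup_primitive m ?a ?b (y \<circ> Suc))"
    by (simp add: fun_eq_iff)
  have first: "coboundary (Suc m) (\<lambda>y. (a 0 (y 0) - b 0 (y 0)) * cup_deltas (Suc m) ?a y) x
     = ((a 0 (x 1) - b 0 (x 1)) - (a 0 (x 0) - b 0 (x 0))) * cup_deltas (Suc m) ?a (x \<circ> Suc)"
    using coboundary_cup0[of "Suc m" "cup_deltas (Suc m) ?a" "\<lambda>z. a 0 z - b 0 z" x, OF cup_deltas_local]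
    by (simp add: coboundary_cup_deltas)
  have second: "coboundary (Suc m) (\<lambda>y. (b 0 (y 1) - b 0 (y 0)) * cup_primitive m ?a ?b (y \<circ> Suc)) x
     = - (b 0 (x 1) - b 0 (x 0)) * (cup_deltas (Suc m) ?a (x \<circ> Suc) - cup_deltas (Suc m) ?b (x \<circ> Suc))"
    using coboundary_delta_cup[of m "cup_primitive m ?a ?b" "b 0" x, OF cup_primitive_local]
      Suc.IH[of ?a "x \<circ> Suc" ?b] by (simp only: mult_minus_left)
  show ?case
    unfolding split coboundary_diff first second cup_deltas_Suc[of "Suc m"] by (simp add: algebra_simps)
qed

definition antisymmetrize :: "nat \<Rightarrow> ((nat \<Rightarrow> nat) \<Rightarrow> 'b \<Rightarrow> complex) \<Rightarrow> 'b \<Rightarrow> complex" where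
  "antisymmetrize n F x = (\<Sum>\<tau> | \<tau> permutes {..<n}. of_int (sign \<tau>) * F \<tau> x)"

lemma antisymmetrize_diff:
  "antisymmetrize n F x - antisymmetrize n G x = antisymmetrize n (\<lambda>\<tau> y. F \<tau> y - G \<tau> y) x"
  unfolding antisymmetrize_def by (simp add: right_diff_distrib sum_subtractf)

lemma coboundary_antisymmetrize:
  "coboundary m (antisymmetrize n F) x = antisymmetrize n (\<lambda>\<tau>. coboundary m (F \<tau>)) x"
  unfolding antisymmetrize_def[abs_def] by (rule coboundary_sum)

lemma antisymmetrize_nonzeroE:
  assumes "antisymmetrize n F x \<noteq> 0" "l \<in> {1..n}"
  obtains \<tau> k where "\<tau> permutes {..<n}" "k < n" "Suc (\<tau> k) = l" "F \<tau> x \<noteq> 0"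
proof -
  obtain \<tau> where \<tau>: "\<tau> permutes {..<n}" "F \<tau> x \<noteq> 0"
    using assms(1) unfolding antisymmetrize_def
    by (auto elim: sum.not_neutral_contains_not_neutral)
  have "l - 1 \<in> \<tau> ` {..<n}"
    using permutes_image[OF \<tau>(1)] assms(2) by auto
  then show ?thesis using that \<tau> assms(2) by auto
qed

definition row_diff_mat :: "nat \<Rightarrow> 'a::comm_ring_1 mat" where
  "row_diff_mat n = mat n n (\<lambda>(i, j). if i = j then 1 else if i = Suc j then -1 else 0)"

lemma row_diff_mat_carrier: "row_diff_mat n \<in> carrier_mat n n"
  by (simp add: row_diff_mat_def)

lemma det_row_diff_mat: "Determinant.det (row_diff_mat n) = 1"
proof -
  have diag: "diag_mat (row_diff_mat n) = replicate n 1"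
    by (rule nth_equalityI) (auto simp: diag_mat_def row_diff_mat_def)
  have lower: "row_diff_mat n $$ (i, j) = 0" if "i < j" "j < n" for i j
    using that by (simp add: row_diff_mat_def)
  have "Determinant.det (row_diff_mat n) = prod_list (diag_mat (row_diff_mat n))"
    by (rule det_lower_triangular[OF lower row_diff_mat_carrier])
  then show ?thesis by (simp add: diag prod_list_replicate)
qed

lemma row_diff_mat_mult_entry:
  assumes A: "A \<in> carrier_mat n n" and ij: "i < n" "j < n"
  shows "(row_diff_mat n * A) $$ (i, j) = (if i = 0 then A $$ (0, j) else A $$ (i, j) - A $$ (i - 1, j))"
proof -
  have "(row_diff_mat n * A) $$ (i, j)
      = (\<Sum>k\<in>{0..<n}. (if i = k then 1 else if i = Suc k then -1 else 0) * A $$ (k, j))"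
    using A ij by (simp add: row_diff_mat_def scalar_prod_def)
  also have "\<dots> = (\<Sum>k\<in>{0..<n}. if k = i then A $$ (k, j) else 0)
      - (\<Sum>k\<in>{0..<n}. if Suc k = i then A $$ (k, j) else 0)"
    unfolding sum_subtractf[symmetric] by (rule sum.cong) auto
  also have "\<dots> = (if i = 0 then A $$ (0, j) else A $$ (i, j) - A $$ (i - 1, j))"
    using ij by (cases i) (simp_all add: sum.delta')
  finally show ?thesis .
qed

text \<open>After subtracting from each row of \<open>[one_then h j (x i)]\<close> the previous one, the first
  column is \<open>(1, 0, \<dots>, 0)\<close> and the complementary minor is \<open>[h (j+1) (x (i+1)) - h (j+1) (x i)]\<close>.\<close>
lemma wedge_one_then_eq_antisymmetrize:
  "wedge n (one_then h) = antisymmetrize n (\<lambda>\<tau>. cup_deltas n (\<lambda>k. h (Suc (\<tau> k))))"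
proof
  fix x
  define A :: "complex mat" where "A = mat (Suc n) (Suc n) (\<lambda>(i, j). one_then h j (x i))"
  define B where "B = row_diff_mat (Suc n) * A"
  have A_carrier: "A \<in> carrier_mat (Suc n) (Suc n)" by (simp add: A_def)
  then have B_carrier: "B \<in> carrier_mat (Suc n) (Suc n)"
    unfolding B_def by (rule mult_carrier_mat[OF row_diff_mat_carrier])
  have B_col0: "B $$ (i, 0) = (if i = 0 then 1 else 0)" if "i < Suc n" for i
    using row_diff_mat_mult_entry[OF A_carrier that] that by (simp add: B_def A_def one_then_def)
  have minor: "mat_delete B 0 0 $$ (i, j) = h (Suc j) (x (Suc i)) - h (Suc j) (x i)"
    if "i < n" "j < n" for i j
    using that mat_delete_index[OF B_carrier, of 0 0 i j, simplified]
      row_diff_mat_mult_entry[OF A_carrier, of "Suc i" "Suc j"]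
    by (simp add: insert_index_def B_def A_def one_then_def)
  have "wedge n (one_then h) x = Determinant.det A"
    unfolding det_def'[OF A_carrier] wedge_def atLeast0LessThan lessThan_Suc_atMost
  proof (intro sum.cong refl)
    fix \<sigma> assume "\<sigma> \<in> {\<sigma>. \<sigma> permutes {..n}}"
    then have bound: "\<sigma> i < Suc n" if "i \<le> n" for i
      using permutes_in_image[of \<sigma> "{..n}" i] that by simp
    show "of_int (sign \<sigma>) * (\<Prod>i\<le>n. one_then h (\<sigma> i) (x i))
        = of_int (sign \<sigma>) * (\<Prod>i\<le>n. A $$ (i, \<sigma> i))"
      by (intro arg_cong[where f="\<lambda>p. of_int (sign \<sigma>) * p"] prod.cong refl)
         (simp add: A_def bound)
  qed
  also have "\<dots> = Determinant.det B"
    using det_mult[OF row_diff_mat_carrier A_carrier] by (simp add: B_def det_row_diff_mat)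
  also have "\<dots> = (\<Sum>i<Suc n. B $$ (i, 0) * cofactor B i 0)"
    by (rule laplace_expansion_column[OF B_carrier]) simp
  also have "\<dots> = Determinant.det (mat_delete B 0 0)"
    by (simp add: B_col0 cofactor_def sum.lessThan_Suc_shift del: sum.lessThan_Suc)
  also have "\<dots> = antisymmetrize n (\<lambda>\<tau>. cup_deltas n (\<lambda>k. h (Suc (\<tau> k)))) x"
    unfolding det_def'[OF mat_delete_carrier[OF B_carrier, simplified]] atLeast0LessThan
      antisymmetrize_def cup_deltas_def
  proof (intro sum.cong refl)
    fix \<sigma> assume "\<sigma> \<in> {\<sigma>. \<sigma> permutes {..<n}}"
    then have bound: "\<sigma> i < n" if "i < n" for i
      using permutes_in_image[of \<sigma> "{..<n}" i] that by simp
    show "of_int (sign \<sigma>) * (\<Prod>i<n. mat_delete B 0 0 $$ (i, \<sigma> i))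
        = of_int (sign \<sigma>) * (\<Prod>k<n. h (Suc (\<sigma> k)) (x (Suc k)) - h (Suc (\<sigma> k)) (x k))"
      by (intro arg_cong[where f="\<lambda>p. of_int (sign \<sigma>) * p"] prod.cong refl)
         (simp add: minor bound)
  qed
  finally show "wedge n (one_then h) x = antisymmetrize n (\<lambda>\<tau>. cup_deltas n (\<lambda>k. h (Suc (\<tau> k)))) x" .
qed

lemma bounded_mult_comp:
  fixes f g :: "'a \<Rightarrow> 'b::real_normed_algebra"
  assumes "bounded (f ` S)" "bounded (g ` S)"
  shows "bounded ((\<lambda>x. f x * g x) ` S)"
proof -
  obtain B C where "\<And>x. x \<in> S \<Longrightarrow> norm (f x) \<le> B" "\<And>x. x \<in> S \<Longrightarrow> norm (g x) \<le> C"
    using assms unfolding bounded_iff by blast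
  then have "norm (f x * g x) \<le> B * C" if "x \<in> S" for x
    using that by (intro order_trans[OF norm_mult_ineq] mult_mono) (auto intro: order_trans[OF norm_ge_zero])
  then show ?thesis unfolding bounded_iff by blast
qed

definition bounded_borel :: "'a measure \<Rightarrow> ('a \<Rightarrow> complex) \<Rightarrow> bool" where
  "bounded_borel M f \<longleftrightarrow> f \<in> borel_measurable M \<and> bounded (range f)"

lemma bounded_borel_const: "bounded_borel M (\<lambda>_. c)"
  by (simp add: bounded_borel_def)

lemma bounded_borel_diff:
  "bounded_borel M f \<Longrightarrow> bounded_borel M g \<Longrightarrow> bounded_borel M (\<lambda>x. f x - g x)"
  by (simp add: bounded_borel_def bounded_minus_comp borel_measurable_diff)

lemma bounded_borel_mult:
  "bounded_borel M f \<Longrightarrow> bounded_borel M g \<Longrightarrow> bounded_borel M (\<lambda>x. f x * g x)"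
  by (simp add: bounded_borel_def bounded_mult_comp borel_measurable_times)

lemma bounded_borel_sum:
  "finite I \<Longrightarrow> (\<And>i. i \<in> I \<Longrightarrow> bounded_borel M (f i)) \<Longrightarrow> bounded_borel M (\<lambda>x. \<Sum>i\<in>I. f i x)"
  by (induction I rule: finite_induct)
     (simp_all add: bounded_borel_const bounded_borel_def bounded_plus_comp borel_measurable_add)

lemma bounded_borel_prod:
  "finite I \<Longrightarrow> (\<And>i. i \<in> I \<Longrightarrow> bounded_borel M (f i)) \<Longrightarrow> bounded_borel M (\<lambda>x. \<Prod>i\<in>I. f i x)"
  by (induction I rule: finite_induct)
     (simp_all add: bounded_borel_const bounded_borel_mult)

lemma bounded_borel_component:
  assumes "bounded_borel borel f" "j \<in> I"
  shows "bounded_borel (PiM I (\<lambda>_. borel)) (\<lambda>y. f (y j))"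
proof -
  have "range (\<lambda>y. f (y j)) \<subseteq> range f" by auto
  moreover have "(\<lambda>y. f (y j)) \<in> borel_measurable (PiM I (\<lambda>_. borel))"
    using assms(1) unfolding bounded_borel_def
    by (intro measurable_compose[OF measurable_component_singleton[OF assms(2)]]) simp
  ultimately show ?thesis
    using assms unfolding bounded_borel_def by (auto intro: bounded_subset)
qed

lemma bounded_borel_indicator_supp:
  assumes "f \<in> borel_measurable borel"
  shows "bounded_borel borel (indicator (supp f) :: 'a::topological_space \<Rightarrow> complex)"
proof -
  have "supp f \<in> sets borel"
    unfolding supp_def using assms by measurable
  moreover have "bounded (range (indicator (supp f) :: 'a \<Rightarrow> complex))"
    by (rule bounded_subset[of "{0, 1}"]) (auto simp: indicator_def)
  ultimately show ?thesis
    unfolding bounded_borel_def by (simp add: borel_measurable_indicator)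
qed

lemma bounded_borel_cup_deltas:
  assumes "\<And>k. k < m \<Longrightarrow> bounded_borel borel (a k)" and "\<And>k. k \<le> m \<Longrightarrow> c k \<le> N"
  shows "bounded_borel (PiM {..N} (\<lambda>_. borel)) (\<lambda>y. cup_deltas m a (\<lambda>k. y (c k)))"
  unfolding cup_deltas_def
proof (intro bounded_borel_prod bounded_borel_diff)
  fix k assume "k \<in> {..<m}"
  then show "bounded_borel (PiM {..N} (\<lambda>_. borel)) (\<lambda>y. a k (y (c (Suc k))))"
    "bounded_borel (PiM {..N} (\<lambda>_. borel)) (\<lambda>y. a k (y (c k)))"
    using assms by (auto intro!: bounded_borel_component)
qed simp

lemma bounded_borel_cup_primitive:
  assumes "\<And>k. k \<le> m \<Longrightarrow> bounded_borel borel (a k)" "\<And>k. k \<le> m \<Longrightarrow> bounded_borel borel (b k)"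
    and "\<And>k. k \<le> m \<Longrightarrow> c k \<le> N"
  shows "bounded_borel (PiM {..N} (\<lambda>_. borel)) (\<lambda>y. cup_primitive m a b (\<lambda>k. y (c k)))"
  using assms
proof (induction m arbitrary: a b c)
  case 0
  then show ?case by (auto intro!: bounded_borel_diff bounded_borel_component)
next
  case (Suc m)
  have coord: "bounded_borel (PiM {..N} (\<lambda>_. borel)) (\<lambda>y. f (y (c j)))"
    if "bounded_borel borel f" "j \<le> Suc m" for f j
    using that Suc.prems(3) by (intro bounded_borel_component) auto
  have deltas: "bounded_borel (PiM {..N} (\<lambda>_. borel)) (\<lambda>y. cup_deltas (Suc m) (a \<circ> Suc) (\<lambda>k. y (c k)))"
    using Suc.prems by (intro bounded_borel_cup_deltas) auto
  have IH: "bounded_borel (PiM {..N} (\<lambda>_. borel))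
      (\<lambda>y. cup_primitive m (a \<circ> Suc) (b \<circ> Suc) (\<lambda>k. y (c (Suc k))))"
    by (rule Suc.IH) (use Suc.prems in auto)
  have split: "(\<lambda>y. cup_primitive (Suc m) a b (\<lambda>k. y (c k)))
    = (\<lambda>y. (a 0 (y (c 0)) - b 0 (y (c 0))) * cup_deltas (Suc m) (a \<circ> Suc) (\<lambda>k. y (c k))
        - (b 0 (y (c 1)) - b 0 (y (c 0))) * cup_primitive m (a \<circ> Suc) (b \<circ> Suc) (\<lambda>k. y (c (Suc k))))"
    by (simp add: comp_def)
  show ?case
    unfolding split using Suc.prems by (intro bounded_borel_diff bounded_borel_mult coord IH deltas) auto
qed

definition straddles :: "('a \<Rightarrow> complex) \<Rightarrow> 'a set \<Rightarrow> bool" where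
  "straddles f P \<longleftrightarrow> P \<inter> supp f \<noteq> {} \<and> P \<inter> supp (\<lambda>x. 1 - f x) \<noteq> {}"

lemma straddles_if_not_constant_with_indicator:
  assumes "\<not> (\<exists>c. \<forall>p\<in>P. f p = c \<and> indicator (supp f) p = c)"
  shows "straddles f P"
proof -
  have "\<forall>p\<in>P. f p = 0 \<and> indicator (supp f) p = (0::complex)" if "P \<inter> supp f = {}"
    using that by (auto simp: supp_def)
  moreover have "\<forall>p\<in>P. f p = 1 \<and> indicator (supp f) p = (1::complex)" if "P \<inter> supp (\<lambda>x. 1 - f x) = {}"
    using that by (auto simp: supp_def indicator_def)
  ultimately show ?thesis using assms unfolding straddles_def by blast
qed

lemma mem_thickeningI: "y \<in> Y \<Longrightarrow> dist x y \<le> R \<Longrightarrow> x \<in> thickening Y R"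
  unfolding thickening_def using infdist_le[of y Y x] by auto

lemma dist_max_le_iff: "dist_max N x y \<le> r \<longleftrightarrow> (\<forall>j\<le>N. dist (x j) (y j) \<le> r)"
  unfolding dist_max_def by (subst Max_le_iff) auto

lemma bounded_support_near_diagonal:
  assumes transverse: "coarsely_transverse_switch n chi"
    and straddling: "\<And>x l. x \<in> tuples N \<Longrightarrow> \<theta> x \<noteq> 0 \<Longrightarrow> l \<in> {1..n} \<Longrightarrow> straddles (chi l) (x ` {..N})"
  shows "bounded_tuples N ({x \<in> tuples N. \<theta> x \<noteq> 0} \<inter> diag_thick N R)"
proof -
  let ?K = "\<Inter>i\<in>{1..n}. thickening (supp (chi i)) R \<inter> thickening (supp (\<lambda>x. 1 - chi i x)) R"
  have "bounded ?K" using transverse by (simp add: coarsely_transverse_switch_def)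
  then obtain c r where cr: "\<And>p. p \<in> ?K \<Longrightarrow> dist c p \<le> r"
    unfolding bounded_def by blast
  have "dist_max N x (\<lambda>_. c) \<le> R + r"
    if hx: "x \<in> tuples N" "\<theta> x \<noteq> 0" "x \<in> diag_thick N R" for x
  proof -
    obtain p where near: "\<And>j. j \<le> N \<Longrightarrow> dist (x j) p \<le> R"
      using hx(3) unfolding diag_thick_def dist_max_le_iff by auto
    have "p \<in> ?K"
    proof
      fix l assume "l \<in> {1..n}"
      then obtain j j' where "j \<le> N" "x j \<in> supp (chi l)" "j' \<le> N" "x j' \<in> supp (\<lambda>z. 1 - chi l z)"
        using straddling[OF hx(1,2)] unfolding straddles_def by blast
      then show "p \<in> thickening (supp (chi l)) R \<inter> thickening (supp (\<lambda>x. 1 - chi l x)) R"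
        using near by (auto intro!: mem_thickeningI simp: dist_commute)
    qed
    then have "dist (x j) c \<le> R + r" if "j \<le> N" for j
      using dist_triangle[of "x j" c p] near[OF that] cr[OF \<open>p \<in> ?K\<close>] by (simp add: dist_commute)
    then show ?thesis unfolding dist_max_le_iff by blast
  qed
  then show ?thesis unfolding bounded_tuples_def by blast
qed

lemma coarse_cochain_if_straddles:
  assumes transverse: "coarsely_transverse_switch n chi"
    and \<theta>: "bounded_borel (PiM {..N} (\<lambda>_. borel)) \<theta>"
    and straddling: "\<And>x l. x \<in> tuples N \<Longrightarrow> \<theta> x \<noteq> 0 \<Longrightarrow> l \<in> {1..n} \<Longrightarrow> straddles (chi l) (x ` {..N})"
  shows "coarse_cochain N \<theta>"
proof -
  have "locally_bounded_on_tuples N \<theta>"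
    using \<theta> unfolding locally_bounded_on_tuples_def bounded_borel_def
    by (auto intro!: exI[of _ 1] intro: bounded_subset)
  then show ?thesis
    using \<theta> bounded_support_near_diagonal[OF transverse straddling]
    unfolding coarse_cochain_def bounded_borel_def by blast
qed

lemma bounded_borel_antisymmetrize:
  "(\<And>\<tau>. \<tau> permutes {..<n} \<Longrightarrow> bounded_borel M (F \<tau>)) \<Longrightarrow> bounded_borel M (antisymmetrize n F)"
  unfolding antisymmetrize_def[abs_def]
  by (intro bounded_borel_sum bounded_borel_mult bounded_borel_const) (auto simp: finite_permutations)

lemma permutes_Suc_range: "\<tau> permutes {..<n} \<Longrightarrow> k < n \<Longrightarrow> Suc (\<tau> k) \<in> {1..n}"
  using permutes_in_image[of \<tau> "{..<n}" k] by simp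

lemma coarse_cocycle_wedge_one_then:
  assumes transverse: "coarsely_transverse_switch n chi"
    and h: "\<And>i. i \<in> {1..n} \<Longrightarrow> bounded_borel borel (h i)"
    and jumps: "\<And>i P. i \<in> {1..n} \<Longrightarrow> \<not> (\<exists>c. \<forall>p\<in>P. h i p = c) \<Longrightarrow> straddles (chi i) P"
  shows "coarse_cocycle n (wedge n (one_then h))"
proof -
  have "coarse_cochain n (wedge n (one_then h))"
    unfolding wedge_one_then_eq_antisymmetrize
  proof (rule coarse_cochain_if_straddles[OF transverse])
    show "bounded_borel (PiM {..n} (\<lambda>_. borel)) (antisymmetrize n (\<lambda>\<tau>. cup_deltas n (\<lambda>k. h (Suc (\<tau> k)))))"
      by (intro bounded_borel_antisymmetrize bounded_borel_cup_deltas[of n _ "\<lambda>k. k"] h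
          permutes_Suc_range) auto
  next
    fix x l
    assume "antisymmetrize n (\<lambda>\<tau>. cup_deltas n (\<lambda>k. h (Suc (\<tau> k)))) x \<noteq> 0" "l \<in> {1..n}"
    then obtain \<tau> k where "k < n" "Suc (\<tau> k) = l" "cup_deltas n (\<lambda>k. h (Suc (\<tau> k))) x \<noteq> 0"
      by (rule antisymmetrize_nonzeroE)
    then have "\<not> (\<exists>c. \<forall>p\<in>x ` {..n}. h l p = c)"
      using cup_deltas_eq_0_if_constant[of k n x "\<lambda>k. h (Suc (\<tau> k))"] by auto
    then show "straddles (chi l) (x ` {..n})" by (rule jumps[OF \<open>l \<in> {1..n}\<close>])
  qed
  moreover have "coboundary n (wedge n (one_then h)) x = 0" for x
    unfolding wedge_one_then_eq_antisymmetrize coboundary_antisymmetrize coboundary_cup_deltas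
    by (simp add: antisymmetrize_def)
  ultimately show ?thesis unfolding coarse_cocycle_def by blast
qed

lemma same_class_wedge_one_then:
  assumes transverse: "coarsely_transverse_switch n chi"
    and a: "\<And>i. i \<in> {1..n} \<Longrightarrow> bounded_borel borel (a i)"
    and b: "\<And>i. i \<in> {1..n} \<Longrightarrow> bounded_borel borel (b i)"
    and jumps: "\<And>i P. i \<in> {1..n} \<Longrightarrow> \<not> (\<exists>c. \<forall>p\<in>P. a i p = c \<and> b i p = c) \<Longrightarrow> straddles (chi i) P"
  shows "same_class n (wedge n (one_then a)) (wedge n (one_then b))"
proof -
  have cocycles: "coarse_cocycle n (wedge n (one_then a))" "coarse_cocycle n (wedge n (one_then b))"
    by (rule coarse_cocycle_wedge_one_then[OF transverse a] coarse_cocycle_wedge_one_then[OF transverse b];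
        auto intro!: jumps)+
  show ?thesis
  proof (cases n)
    case 0
    then show ?thesis
      using cocycles by (simp add: same_class_def wedge_one_then_eq_antisymmetrize antisymmetrize_def
          cup_deltas_def)
  next
    case (Suc m)
    define \<eta> where "\<eta> = antisymmetrize n (\<lambda>\<tau>. cup_primitive m (\<lambda>k. a (Suc (\<tau> k))) (\<lambda>k. b (Suc (\<tau> k))))"
    have "coarse_cochain m \<eta>"
    proof (rule coarse_cochain_if_straddles[OF transverse])
      show "bounded_borel (PiM {..m} (\<lambda>_. borel)) \<eta>"
        unfolding \<eta>_def using Suc
        by (intro bounded_borel_antisymmetrize bounded_borel_cup_primitive[of m _ _ "\<lambda>k. k"] a b
            permutes_Suc_range) auto
    next
      fix x l assume "\<eta> x \<noteq> 0" "l \<in> {1..n}"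
      then obtain \<tau> k where "k < n" "Suc (\<tau> k) = l"
        "cup_primitive m (\<lambda>k. a (Suc (\<tau> k))) (\<lambda>k. b (Suc (\<tau> k))) x \<noteq> 0"
        unfolding \<eta>_def by (rule antisymmetrize_nonzeroE)
      then have "\<not> (\<exists>c. \<forall>p\<in>x ` {..m}. a l p = c \<and> b l p = c)"
        using cup_primitive_eq_0_if_constant[of k m x "\<lambda>k. a (Suc (\<tau> k))" _ "\<lambda>k. b (Suc (\<tau> k))"] Suc
        by auto
      then show "straddles (chi l) (x ` {..m})" by (rule jumps[OF \<open>l \<in> {1..n}\<close>])
    qed
    moreover have "wedge n (one_then a) x - wedge n (one_then b) x = coboundary m \<eta> x" for x
      unfolding wedge_one_then_eq_antisymmetrize \<eta>_def antisymmetrize_diff coboundary_antisymmetrize Suc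
      by (simp only: cup_deltas_diff_eq_coboundary)
    ultimately show ?thesis using cocycles Suc unfolding same_class_def by auto
  qed
qed

theorem lemma5p3:
  fixes chi :: "nat \<Rightarrow> 'a::heine_borel \<Rightarrow> complex" and n :: nat
  assumes "coarsely_transverse_switch n chi"
  shows "coarse_cochain n (wedge n (one_then chi)) \<and>
         same_class n (wedge n (one_then chi))
                      (wedge n (one_then (\<lambda>i. indicator (supp (chi i)))))"
proof -
  have chi: "bounded_borel borel (chi i)" if "i \<in> {1..n}" for i
    using assms that unfolding coarsely_transverse_switch_def bounded_borel_def by blast
  have "same_class n (wedge n (one_then chi)) (wedge n (one_then (\<lambda>i. indicator (supp (chi i)))))"
  proof (rule same_class_wedge_one_then[OF assms chi])
    show "bounded_borel borel (indicator (supp (chi i)))" if "i \<in> {1..n}" for i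
      by (rule bounded_borel_indicator_supp) (use chi[OF that] in \<open>simp add: bounded_borel_def\<close>)
  qed (auto intro: straddles_if_not_constant_with_indicator)
  then show ?thesis unfolding same_class_def coarse_cocycle_def by blast
qed

end
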